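(* Let $\mathcal H$ be a separable Hilbert space and $\mathcal L$ a densely defined positive (self-adjoint) operator on $\mathcal H$ with discrete spectrum $\{\lambda_\xi\}_{\xi\in\mathbb N}$ (eigenvalues counted with multiplicity) whose eigenvectors $\{e_\xi\}$ form an orthonormal basis of $\mathcal H$. Let $\lambda_0:=\inf_{\xi}\lambda_\xi\geq 0$, let $b>0$ and $m\in\mathbb R$, and assume $\lambda_0+m>0$. Let $u$ be the solution of the Cauchy problem $$\partial_t^2u(t)+\mathcal L u(t)+b\,\partial_t u(t)+m\,u(t)=0,\quad t>0,\qquad u(0)=u_0,\quad \partial_t u(0)=u_1 .$$ Then for all $\alpha\in\mathbb N_0$ and $\beta\geq 0$: if $0<b<2\sqrt{\lambda_0+m}$, $$\|\partial_t^\alpha\mathcal L^\beta u(t)\|_{\mathcal H}\lesssim e^{-\frac b2 t}\big(\|u_0\|_{H^{\alpha+2\beta}_{\mathcal L}}+\|u_1\|_{H^{\alpha-1+2\beta}_{\mathcal L}}\big);$$ if $b=2\sqrt{\lambda_0+m}$, $$\|\partial_t^\alpha\mathcal L^\beta u(t)\|_{\mathcal H}\lesssim (1+t)e^{-\frac b2 t}\big(\|u_0\|_{H^{\alpha+2\beta}_{\mathcal L}}+\|u_1\|_{H^{\alpha-1+2\beta}_{\mathcal L}}\big);$$ if $2\sqrt{\lambda_0+m}<b$, $$\|\partial_t^\alpha\mathcal L^\beta u(t)\|_{\mathcal H}\lesssim e^{-\left(\frac b2-\sqrt{\frac{b^2}{4}-\lambda_0-m}\right)t}\big(\|u_0\|_{H^{\alpha+2\beta}_{\mathcal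 L}}+\|u_1\|_{H^{\alpha-1+2\beta}_{\mathcal L}}\big).$$
   Context: For $f$ in $\mathcal H$ (or an $\mathcal L$-distribution), $\widehat f(\xi):=(f,e_\xi)$ is the $\mathcal L$-Fourier coefficient. For $s\in\mathbb R$, the Sobolev space $H^s_{\mathcal L}$ consists of $\mathcal L$-distributions $f$ with $\mathcal L^{s/2}f\in\mathcal H$, with norm $\|f\|_{H^s_{\mathcal L}}:=\|\mathcal L^{s/2}f\|_{\mathcal H}=\big(\sum_{\xi}\lambda_\xi^{s}|\widehat f(\xi)|^2\big)^{1/2}$. The notation $A\lesssim B$ means $A\le CB$ with a constant $C$ independent of $t$ and the data $u_0,u_1$. *)

theory Defs
  imports "HOL-Analysis.Analysis"
begin

text \<open>We work in coordinates with respect to the orthonormal eigenbasis \<open>e_\<xi>\<close>, \<open>\<xi> \<in> \<nat>\<close>: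
  an element (or \<open>\<L>\<close>-distribution) \<open>f\<close> is represented by its sequence of
  \<open>\<L>\<close>-Fourier coefficients \<open>f \<xi> = (f, e_\<xi>)\<close>, and \<open>\<L>\<close> acts by \<open>f \<xi> \<mapsto> lam \<xi> * f \<xi>\<close>.\<close>

definition sob_in :: "(nat \<Rightarrow> real) \<Rightarrow> real \<Rightarrow> (nat \<Rightarrow> complex) \<Rightarrow> bool" where
  "sob_in lam s f \<longleftrightarrow> summable (\<lambda>\<xi>. lam \<xi> powr s * (cmod (f \<xi>))\<^sup>2)"

definition sob_norm :: "(nat \<Rightarrow> real) \<Rightarrow> real \<Rightarrow> (nat \<Rightarrow> complex) \<Rightarrow> real" where
  "sob_norm lam s f = sqrt (\<Sum>\<xi>. lam \<xi> powr s * (cmod (f \<xi>))\<^sup>2)"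

definition in_H :: "(nat \<Rightarrow> complex) \<Rightarrow> bool" where
  "in_H f \<longleftrightarrow> summable (\<lambda>\<xi>. (cmod (f \<xi>))\<^sup>2)"

definition H_norm :: "(nat \<Rightarrow> complex) \<Rightarrow> real" where
  "H_norm f = sqrt (\<Sum>\<xi>. (cmod (f \<xi>))\<^sup>2)"

definition tderiv :: "nat \<Rightarrow> (real \<Rightarrow> complex) \<Rightarrow> real \<Rightarrow> complex" where
  "tderiv k f = ((\<lambda>g t. vector_derivative g (at t)) ^^ k) f"

text \<open>\<open>u t \<xi>\<close> is the \<open>\<xi>\<close>-th Fourier coefficient of \<open>u(t)\<close>. \<open>u\<close> solves
  \<open>u'' + \<L> u + b u' + m u = 0\<close> for \<open>t > 0\<close>, \<open>u(0) = u0\<close>, \<open>u'(0) = u1\<close>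
  (the derivative at \<open>0\<close> is the right derivative).\<close>
definition is_solution ::
  "(nat \<Rightarrow> real) \<Rightarrow> real \<Rightarrow> real \<Rightarrow> (nat \<Rightarrow> complex) \<Rightarrow> (nat \<Rightarrow> complex)
     \<Rightarrow> (real \<Rightarrow> nat \<Rightarrow> complex) \<Rightarrow> bool" where
  "is_solution lam b m u0 u1 u \<longleftrightarrow>
     (\<forall>\<xi>. u 0 \<xi> = u0 \<xi> \<and>
          ((\<lambda>s. u s \<xi>) has_vector_derivative u1 \<xi>) (at 0 within {0..}) \<and>
          (\<exists>ud udd. \<forall>t>0.
              ((\<lambda>s. u s \<xi>) has_vector_derivative ud t) (at t) \<and>
              (ud has_vector_derivative udd t) (at t) \<and>
              udd t + of_real (lam \<xi>) * u t \<xi> + of_real b * ud t + of_real m * u t \<xi> = 0))"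

end

theory Submission
  imports Defs
begin

(* Each Fourier coefficient f(t) = (u(t), e_xi) solves the scalar equation f'' + b f' + mu f = 0
   with mu = lambda_xi + m, so it is an explicit combination of exp(r t) over the roots
   r = -b/2 +- sqrt(b^2/4 - mu), or (P + Q t) exp(-b t/2) for a double root.  Since mu >= lambda_0 + m,
   the real parts of the roots are at most -b/2 + sqrt(max 0 (b^2/4 - lambda_0 - m)); critically damped
   modes contribute the factor 1 + t.  For large lambda_xi the roots are complex with
   |r| = sqrt mu ~ lambda_xi^(1/2) and are at least sqrt mu apart, which gives the uniform bound
   |f^(alpha)(t)| <~ exp(-b t/2) (lambda_xi^(alpha/2) |f(0)| + lambda_xi^((alpha-1)/2) |f'(0)|);
   the finitely many remaining modes are bounded one at a time.  Multiplying by lambda_xi^beta,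
   squaring and summing over xi yields the Sobolev norms of the data. *)

lemma has_vector_derivative_cexp_real:
  "((\<lambda>t::real. exp ((r::complex) * of_real t)) has_vector_derivative r * exp (r * of_real t)) (at t within S)"
proof -
  have "((\<lambda>z. exp (r * z)) has_field_derivative r * exp (r * of_real t)) (at (of_real t))"
    by (auto intro!: derivative_eq_intros)
  then show ?thesis
    by (rule has_vector_derivative_real_field)
qed

(* the integral of exp(a s) over [0, t] *)
definition exp_primitive :: "complex \<Rightarrow> real \<Rightarrow> complex" where
  "exp_primitive a t = (if a = 0 then of_real t else (exp (a * of_real t) - 1) / a)"

lemma exp_primitive_0 [simp]: "exp_primitive a 0 = 0"
  by (simp add: exp_primitive_def)

lemma exp_primitive_has_vector_derivative:
  "(exp_primitive a has_vector_derivative exp (a * of_real t)) (at t within S)"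
proof (cases "a = 0")
  case True
  then show ?thesis
    unfolding exp_primitive_def
    using has_vector_derivative_of_real[OF DERIV_ident[where F = "at t within S"]] by simp
next
  case False
  have "((\<lambda>t. (exp (a * of_real t) - 1) / a) has_vector_derivative (a * exp (a * of_real t) - 0) / a)
          (at t within S)"
    by (intro has_vector_derivative_divide has_vector_derivative_diff
        has_vector_derivative_cexp_real has_vector_derivative_const)
  with False show ?thesis
    unfolding exp_primitive_def by simp
qed

definition damped_solution :: "real \<Rightarrow> real \<Rightarrow> (real \<Rightarrow> complex) \<Rightarrow> complex \<Rightarrow> complex \<Rightarrow> bool" where
  "damped_solution b \<mu> f x0 x1 \<longleftrightarrow>
     f 0 = x0 \<and> (f has_vector_derivative x1) (at 0 within {0..}) \<and>
     (\<exists>f' f''. \<forall>t>0. (f has_vector_derivative f' t) (at t) \<and> (f' has_vector_derivative f'' t) (at t) \<and>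
        f'' t + of_real b * f' t + of_real \<mu> * f t = 0)"

lemma is_solution_imp_damped_solution:
  assumes "is_solution lam b m u0 u1 u"
  shows "damped_solution b (lam \<xi> + m) (\<lambda>s. u s \<xi>) (u0 \<xi>) (u1 \<xi>)"
  using assms unfolding is_solution_def damped_solution_def
  by (simp add: algebra_simps)

lemma linear_ode_solution_pos:
  fixes z :: "real \<Rightarrow> complex"
  assumes "\<And>t. t > 0 \<Longrightarrow> (z has_vector_derivative r * z t) (at t)"
  obtains c where "\<And>t. t > 0 \<Longrightarrow> z t = c * exp (r * of_real t)"
proof -
  define q where "q t = z t * exp (- r * of_real t)" for t
  have q': "(q has_derivative (\<lambda>_. 0)) (at t within {0<..})" if "t > 0" for t
  proof -
    have "(q has_vector_derivative z t * (- r * exp (- r * of_real t)) + r * z t * exp (- r * of_real t)) (at t)"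
      unfolding q_def by (rule has_vector_derivative_mult[OF assms[OF that] has_vector_derivative_cexp_real])
    then have "(q has_vector_derivative 0) (at t)"
      by (simp add: algebra_simps)
    then show ?thesis
      unfolding has_vector_derivative_def by (simp add: has_derivative_at_withinI)
  qed
  have q_const: "q t = q 1" if "t > 0" for t
  proof (rule has_derivative_zero_unique_strong_convex[of "{0<..}" "{}" q 1 "q 1" t])
    show "continuous_on {0<..} q"
      using q' has_derivative_continuous by (metis continuous_on_eq_continuous_within greaterThan_iff)
  qed (use q' that in auto)
  have z_eq: "z t = q t * exp (r * of_real t)" for t
    unfolding q_def by (simp add: mult.assoc flip: exp_add)
  show ?thesis
  proof (rule that)
    show "z t = q 1 * exp (r * of_real t)" if "t > 0" for t
      unfolding z_eq q_const[OF that] ..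
  qed
qed

lemma damped_solution_factored:
  assumes sol: "damped_solution b \<mu> f x0 x1"
    and roots: "r1 + r2 = - of_real b" "r1 * r2 = of_real \<mu>"
  obtains c where "\<And>t. t \<ge> 0 \<Longrightarrow> f t = (x0 + c * exp_primitive (r2 - r1) t) * exp (r1 * of_real t)"
proof -
  obtain f' f'' where f': "\<And>t. t > 0 \<Longrightarrow> (f has_vector_derivative f' t) (at t)"
    and f'': "\<And>t. t > 0 \<Longrightarrow> (f' has_vector_derivative f'' t) (at t)"
    and ode: "\<And>t. t > 0 \<Longrightarrow> f'' t + of_real b * f' t + of_real \<mu> * f t = 0"
    using sol unfolding damped_solution_def by blast
  (* the equation factors as (d/dt - r2) (d/dt - r1) f = 0 *)
  define z where "z t = f' t - r1 * f t" for t
  have "(z has_vector_derivative r2 * z t) (at t)" if "t > 0" for t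
  proof -
    have "(z has_vector_derivative f'' t - r1 * f' t) (at t)"
      unfolding z_def using f' f'' that by (auto intro!: derivative_eq_intros)
    moreover have "f'' t - r1 * f' t = r2 * z t"
      using ode[OF that] roots unfolding z_def by algebra
    ultimately show ?thesis
      by simp
  qed
  then obtain c where z: "\<And>t. t > 0 \<Longrightarrow> z t = c * exp (r2 * of_real t)"
    using linear_ode_solution_pos by blast
  define h where "h t = f t * exp (- r1 * of_real t) - c * exp_primitive (r2 - r1) t" for t
  have h': "(h has_derivative (\<lambda>_. 0)) (at t within {0..})" if "t > 0" for t
  proof -
    have "(h has_vector_derivative (f' t - r1 * f t) * exp (- r1 * of_real t) - c * exp ((r2 - r1) * of_real t)) (at t)"
      unfolding h_def
      by (rule has_vector_derivative_eq_rhs, (rule derivative_intros f'[OF that]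
            has_vector_derivative_cexp_real exp_primitive_has_vector_derivative)+)
         (simp add: algebra_simps)
    also have "(f' t - r1 * f t) * exp (- r1 * of_real t) = c * exp ((r2 - r1) * of_real t)"
      using z[OF that] unfolding z_def by (simp add: algebra_simps flip: exp_add)
    finally show ?thesis
      unfolding has_vector_derivative_def by (simp add: has_derivative_at_withinI)
  qed
  have "continuous (at t within {0..}) h" if "t \<ge> 0" for t
  proof (cases "t = 0")
    case True
    have "continuous (at 0 within {0..}) f"
      using sol unfolding damped_solution_def by (blast intro: has_vector_derivative_continuous)
    with True show ?thesis
      unfolding h_def
      by (intro continuous_intros has_vector_derivative_continuous[OF has_vector_derivative_cexp_real]
          has_vector_derivative_continuous[OF exp_primitive_has_vector_derivative]) auto
  next
    case False
    with h'[of t] that show ?thesis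
      using has_derivative_continuous by auto
  qed
  then have h_cont: "continuous_on {0..} h"
    by (simp add: continuous_on_eq_continuous_within)
  have h0: "h 0 = x0"
    using sol unfolding h_def damped_solution_def by simp
  have h_const: "h t = x0" if "t \<ge> 0" for t
    by (rule has_derivative_zero_unique_strong_convex[of "{0..}" "{0}" h 0 x0 t])
       (use h_cont h0 h' that in auto)
  have f_eq: "f t = (h t + c * exp_primitive (r2 - r1) t) * exp (r1 * of_real t)" for t
    unfolding h_def by (simp add: algebra_simps flip: exp_add)
  show ?thesis
  proof (rule that)
    fix t :: real
    assume "t \<ge> 0"
    show "f t = (x0 + c * exp_primitive (r2 - r1) t) * exp (r1 * of_real t)"
      unfolding f_eq h_const[OF \<open>t \<ge> 0\<close>] ..
  qed
qed

lemma damped_solution_repr: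
  assumes sol: "damped_solution b \<mu> f x0 x1"
    and roots: "r1 + r2 = - of_real b" "r1 * r2 = of_real \<mu>"
    and "t \<ge> 0"
  shows "f t = (x0 + (x1 - r1 * x0) * exp_primitive (r2 - r1) t) * exp (r1 * of_real t)"
proof -
  obtain c where f: "\<And>t. t \<ge> 0 \<Longrightarrow> f t = (x0 + c * exp_primitive (r2 - r1) t) * exp (r1 * of_real t)"
    using damped_solution_factored[OF sol roots] by blast
  define F where "F t = (x0 + c * exp_primitive (r2 - r1) t) * exp (r1 * of_real t)" for t
  have "(F has_vector_derivative c + r1 * x0) (at 0 within {0..1})"
    unfolding F_def
    by (rule has_vector_derivative_eq_rhs[OF has_vector_derivative_mult[OF has_vector_derivative_add[OF
          has_vector_derivative_const has_vector_derivative_mult_right[OF exp_primitive_has_vector_derivative]]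
          has_vector_derivative_cexp_real]]) simp
  moreover have "(F has_vector_derivative x1) (at 0 within {0..1})"
  proof (rule has_vector_derivative_transform[of 0 "{0..1}" _ f])
    have "(f has_vector_derivative x1) (at 0 within {0..})"
      using sol unfolding damped_solution_def by simp
    then show "(f has_vector_derivative x1) (at 0 within {0..1})"
      by (rule has_vector_derivative_within_subset) auto
    show "F x = f x" if "x \<in> {0..1}" for x
      using f[of x] that by (simp add: F_def)
  qed simp
  ultimately have "c + r1 * x0 = x1"
    using vector_derivative_unique_within_closed_interval[of 0 1 0] by simp
  then have "c = x1 - r1 * x0"
    by (simp add: eq_diff_eq)
  with f[OF \<open>t \<ge> 0\<close>] show ?thesis
    by simp
qed

lemma tderiv_0 [simp]: "tderiv 0 f = f"
  by (simp add: tderiv_def)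

lemma tderiv_Suc: "tderiv (Suc k) f = tderiv k (\<lambda>t. vector_derivative f (at t))"
  unfolding tderiv_def funpow_Suc_right by simp

lemma tderiv_cong_pos:
  assumes "\<And>t. t > 0 \<Longrightarrow> f t = g t" and "t > 0"
  shows "tderiv k f t = tderiv k g t"
  using assms
proof (induction k arbitrary: f g)
  case 0
  then show ?case by simp
next
  case (Suc k)
  have "vector_derivative f (at t) = vector_derivative g (at t)" if "t > 0" for t
  proof -
    have "(f has_vector_derivative D) (at t) \<longleftrightarrow> (g has_vector_derivative D) (at t)" for D
    proof
      assume "(f has_vector_derivative D) (at t)"
      then show "(g has_vector_derivative D) (at t)"
        by (rule has_vector_derivative_transform_within_open[of f D t "{0<..}"]) (use Suc.prems that in auto)
    next
      assume "(g has_vector_derivative D) (at t)"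
      then show "(f has_vector_derivative D) (at t)"
        by (rule has_vector_derivative_transform_within_open[of g D t "{0<..}"]) (use Suc.prems that in auto)
    qed
    then show ?thesis
      unfolding vector_derivative_def by simp
  qed
  then show ?case
    unfolding tderiv_Suc by (rule Suc.IH[OF _ Suc.prems(2)])
qed

lemma tderiv_exp_sum:
  "tderiv k (\<lambda>t. A * exp (r1 * of_real t) + B * exp (r2 * of_real t)) t
     = A * r1 ^ k * exp (r1 * of_real t) + B * r2 ^ k * exp (r2 * of_real t)"
proof (induction k arbitrary: A B)
  case 0
  then show ?case by simp
next
  case (Suc k)
  have deriv: "(\<lambda>t. vector_derivative (\<lambda>t. A * exp (r1 * of_real t) + B * exp (r2 * of_real t)) (at t))
      = (\<lambda>t. (A * r1) * exp (r1 * of_real t) + (B * r2) * exp (r2 * of_real t))"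
    by (rule ext, rule vector_derivative_at, rule has_vector_derivative_eq_rhs,
        (rule derivative_intros has_vector_derivative_cexp_real)+) (simp add: algebra_simps)
  show ?case
    unfolding tderiv_Suc deriv Suc.IH by (simp add: algebra_simps)
qed

lemma tderiv_linear_times_exp:
  "tderiv k (\<lambda>t. (P + Q * of_real t) * exp (r * of_real t)) t
     = (P * r ^ k + of_nat k * Q * r ^ (k - 1) + Q * r ^ k * of_real t) * exp (r * of_real t)"
proof (induction k arbitrary: P Q)
  case 0
  then show ?case by simp
next
  case (Suc k)
  have deriv: "(\<lambda>t. vector_derivative (\<lambda>t. (P + Q * of_real t) * exp (r * of_real t)) (at t))
      = (\<lambda>t. ((P * r + Q) + (Q * r) * of_real t) * exp (r * of_real t))"
    by (rule ext, rule vector_derivative_at, rule has_vector_derivative_eq_rhs,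
        (rule derivative_intros has_vector_derivative_cexp_real
          has_vector_derivative_of_real[OF DERIV_ident])+) (simp add: algebra_simps)
  have "of_nat k * (Q * r) * r ^ (k - 1) = of_nat k * Q * r ^ k"
    by (cases k) auto
  then show ?case
    unfolding tderiv_Suc deriv Suc.IH by (simp add: algebra_simps)
qed

lemma tderiv_damped_solution_distinct:
  assumes sol: "damped_solution b \<mu> f x0 x1"
    and roots: "r1 + r2 = - of_real b" "r1 * r2 = of_real \<mu>" and "r1 \<noteq> r2" and "t > 0"
  defines "B \<equiv> (x1 - r1 * x0) / (r2 - r1)"
  shows "tderiv k f t = (x0 - B) * r1 ^ k * exp (r1 * of_real t) + B * r2 ^ k * exp (r2 * of_real t)"
proof -
  have f: "f t = (x0 - B) * exp (r1 * of_real t) + B * exp (r2 * of_real t)" if "t > 0" for t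
  proof -
    have "f t = (x0 + B * (exp ((r2 - r1) * of_real t) - 1)) * exp (r1 * of_real t)"
      using damped_solution_repr[OF sol roots, of t] that \<open>r1 \<noteq> r2\<close>
      unfolding B_def exp_primitive_def by simp
    also have "\<dots> = (x0 - B) * exp (r1 * of_real t) + B * (exp ((r2 - r1) * of_real t) * exp (r1 * of_real t))"
      by (simp add: algebra_simps)
    also have "exp ((r2 - r1) * of_real t) * exp (r1 * of_real t) = exp (r2 * of_real t)"
      by (simp add: algebra_simps flip: exp_add)
    finally show ?thesis .
  qed
  have "tderiv k f t = tderiv k (\<lambda>t. (x0 - B) * exp (r1 * of_real t) + B * exp (r2 * of_real t)) t"
    using f \<open>t > 0\<close> by (rule tderiv_cong_pos)
  then show ?thesis
    by (simp only: tderiv_exp_sum)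
qed

lemma norm_tderiv_damped_solution_le_coeffs:
  assumes sol: "damped_solution b \<mu> f x0 x1"
    and roots: "r1 + r2 = - of_real b" "r1 * r2 = of_real \<mu>" and "r1 \<noteq> r2"
    and "Re r2 \<le> Re r1" and "t > 0"
  defines "B \<equiv> (x1 - r1 * x0) / (r2 - r1)"
  shows "cmod (tderiv k f t) \<le> (cmod (x0 - B) * cmod r1 ^ k + cmod B * cmod r2 ^ k) * exp (Re r1 * t)"
proof -
  have "cmod (tderiv k f t)
      \<le> cmod ((x0 - B) * r1 ^ k * exp (r1 * of_real t)) + cmod (B * r2 ^ k * exp (r2 * of_real t))"
    unfolding tderiv_damped_solution_distinct[OF sol roots \<open>r1 \<noteq> r2\<close> \<open>t > 0\<close>] B_def
    by (rule norm_triangle_ineq)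
  also have "\<dots> = cmod (x0 - B) * cmod r1 ^ k * exp (Re r1 * t) + cmod B * cmod r2 ^ k * exp (Re r2 * t)"
    by (simp add: norm_mult norm_power)
  also have "\<dots> \<le> cmod (x0 - B) * cmod r1 ^ k * exp (Re r1 * t) + cmod B * cmod r2 ^ k * exp (Re r1 * t)"
  proof -
    have "exp (Re r2 * t) \<le> exp (Re r1 * t)"
      using \<open>Re r2 \<le> Re r1\<close> \<open>t > 0\<close> by (simp add: mult_right_mono)
    then show ?thesis
      by (intro add_left_mono mult_left_mono) simp_all
  qed
  finally show ?thesis
    by (simp add: algebra_simps)
qed

lemma norm_tderiv_damped_solution_le_data:
  assumes sol: "damped_solution b \<mu> f x0 x1"
    and roots: "r1 + r2 = - of_real b" "r1 * r2 = of_real \<mu>" and "r1 \<noteq> r2"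
    and "Re r2 \<le> Re r1" and "t > 0"
  defines "K \<equiv> (1 + cmod r1) / cmod (r2 - r1)"
  shows "cmod (tderiv k f t) \<le> ((1 + K) * cmod r1 ^ k + K * cmod r2 ^ k) * (cmod x0 + cmod x1) * exp (Re r1 * t)"
proof -
  define U where "U = cmod x0 + cmod x1"
  define B where "B = (x1 - r1 * x0) / (r2 - r1)"
  have "cmod (x1 - r1 * x0) \<le> cmod x1 + cmod r1 * cmod x0"
    using norm_triangle_ineq4[of x1 "r1 * x0"] by (simp add: norm_mult)
  also have "\<dots> \<le> (1 + cmod r1) * U"
    unfolding U_def by (simp add: algebra_simps)
  finally have "cmod (x1 - r1 * x0) / cmod (r2 - r1) \<le> (1 + cmod r1) * U / cmod (r2 - r1)"
    by (rule divide_right_mono) simp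
  then have B: "cmod B \<le> K * U"
    unfolding B_def K_def by (simp add: norm_divide)
  have "cmod x0 \<le> U"
    unfolding U_def by simp
  then have x0B: "cmod (x0 - B) \<le> (1 + K) * U"
    using norm_triangle_ineq4[of x0 B] B by (simp add: distrib_right)
  have "cmod (tderiv k f t) \<le> (cmod (x0 - B) * cmod r1 ^ k + cmod B * cmod r2 ^ k) * exp (Re r1 * t)"
    unfolding B_def by (rule norm_tderiv_damped_solution_le_coeffs; fact)
  also have "\<dots> \<le> ((1 + K) * cmod r1 ^ k + K * cmod r2 ^ k) * U * exp (Re r1 * t)"
    using mult_right_mono[OF x0B, of "cmod r1 ^ k"] mult_right_mono[OF B, of "cmod r2 ^ k"]
    by (intro mult_right_mono) (simp_all add: algebra_simps)
  finally show ?thesis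
    unfolding U_def .
qed

lemma tderiv_damped_solution_double:
  assumes sol: "damped_solution b \<mu> f x0 x1"
    and root: "2 * r = - of_real b" "r\<^sup>2 = of_real \<mu>" and "t > 0"
  defines "c \<equiv> x1 - r * x0"
  shows "tderiv k f t = (x0 * r ^ k + of_nat k * c * r ^ (k - 1) + c * r ^ k * of_real t) * exp (r * of_real t)"
proof -
  have roots: "r + r = - of_real b" "r * r = of_real \<mu>"
    using root by (simp_all add: power2_eq_square)
  have "f t = (x0 + c * of_real t) * exp (r * of_real t)" if "t > 0" for t
    using damped_solution_repr[OF sol roots, of t] that unfolding c_def exp_primitive_def by simp
  then have "tderiv k f t = tderiv k (\<lambda>t. (x0 + c * of_real t) * exp (r * of_real t)) t"
    using \<open>t > 0\<close> by (rule tderiv_cong_pos)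
  then show ?thesis
    by (simp only: tderiv_linear_times_exp)
qed

lemma norm_tderiv_damped_solution_double_le:
  assumes sol: "damped_solution b \<mu> f x0 x1"
    and root: "2 * r = - of_real b" "r\<^sup>2 = of_real \<mu>" and "t > 0"
  defines "R \<equiv> cmod r"
  shows "cmod (tderiv k f t)
    \<le> (R ^ k + (k * R ^ (k - 1) + R ^ k) * (1 + R)) * (cmod x0 + cmod x1) * ((1 + t) * exp (Re r * t))"
proof -
  define U where "U = cmod x0 + cmod x1"
  define a where "a = x1 - r * x0"
  have "R \<ge> 0" "cmod x0 \<le> U" "U \<ge> 0"
    unfolding R_def U_def by simp_all
  have "cmod a \<le> cmod x1 + R * cmod x0"
    using norm_triangle_ineq4[of x1 "r * x0"] unfolding a_def R_def by (simp add: norm_mult)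
  also have "\<dots> \<le> (1 + R) * U"
    using \<open>R \<ge> 0\<close> unfolding U_def by (simp add: algebra_simps)
  finally have a: "cmod a \<le> (1 + R) * U" .
  have "cmod (x0 * r ^ k + of_nat k * a * r ^ (k - 1) + a * r ^ k * of_real t)
      \<le> cmod x0 * R ^ k + k * cmod a * R ^ (k - 1) + cmod a * R ^ k * t"
    using norm_triangle_ineq[of "x0 * r ^ k + of_nat k * a * r ^ (k - 1)" "a * r ^ k * of_real t"]
      norm_triangle_ineq[of "x0 * r ^ k" "of_nat k * a * r ^ (k - 1)"] \<open>t > 0\<close>
    unfolding R_def by (simp add: norm_mult norm_power)
  also have "\<dots> \<le> U * R ^ k + k * ((1 + R) * U) * R ^ (k - 1) + (1 + R) * U * R ^ k * t"
    using \<open>cmod x0 \<le> U\<close> a \<open>R \<ge> 0\<close> \<open>t > 0\<close>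
    by (intro add_mono mult_right_mono mult_left_mono) auto
  also have "\<dots> \<le> (R ^ k + (k * R ^ (k - 1) + R ^ k) * (1 + R)) * U * (1 + t)"
  proof -
    have "0 \<le> U * R ^ k * t" "0 \<le> real k * ((1 + R) * U) * R ^ (k - 1) * t"
      "0 \<le> U * R ^ k" "0 \<le> R * (U * R ^ k)"
      using \<open>U \<ge> 0\<close> \<open>R \<ge> 0\<close> \<open>t > 0\<close> by simp_all
    then show ?thesis
      by (simp add: algebra_simps)
  qed
  finally show ?thesis
    unfolding tderiv_damped_solution_double[OF sol root \<open>t > 0\<close>] a_def U_def norm_mult
    by (simp add: mult_right_mono mult.assoc)
qed

lemma Re_csqrt_of_real_le:
  assumes "q \<ge> 0" and "x \<le> q\<^sup>2"
  shows "Re (csqrt (of_real x)) \<le> q"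
proof (cases "x \<ge> 0")
  case True
  then have "Re (csqrt (of_real x)) = sqrt x"
    by (simp add: csqrt_of_real)
  also have "\<dots> \<le> q"
    using assms real_sqrt_le_mono[of x "q\<^sup>2"] by simp
  finally show ?thesis .
qed (use assms in simp)

lemma damped_mode_bound_distinct:
  fixes g :: "real \<Rightarrow> real"
  assumes "\<mu> \<noteq> b\<^sup>2 / 4" and "q \<ge> 0" and "b\<^sup>2 / 4 - \<mu> \<le> q\<^sup>2"
    and g: "\<And>t. t > 0 \<Longrightarrow> exp ((q - b / 2) * t) \<le> c * g t"
  shows "\<exists>C. \<forall>f x0 x1 t. damped_solution b \<mu> f x0 x1 \<and> t > 0 \<longrightarrow>
           cmod (tderiv k f t) \<le> C * g t * (cmod x0 + cmod x1)"
proof -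
  define s where "s = csqrt (of_real (b\<^sup>2 / 4 - \<mu>))"
  define r1 where "r1 = - of_real b / 2 + s"
  define r2 where "r2 = - of_real b / 2 - s"
  have roots: "r1 + r2 = - of_real b" "r1 * r2 = of_real \<mu>"
    unfolding r1_def r2_def s_def by (simp_all add: algebra_simps power2_eq_square[symmetric] power_divide)
  have "s \<noteq> 0"
    using assms(1) unfolding s_def csqrt_eq_0 of_real_eq_0_iff by simp
  then have "r1 \<noteq> r2"
    unfolding r1_def r2_def by simp
  have "Re s \<ge> 0"
    unfolding s_def by (rule Re_csqrt)
  then have "Re r2 \<le> Re r1"
    unfolding r1_def r2_def by simp
  have "Re s \<le> q"
    unfolding s_def by (rule Re_csqrt_of_real_le[OF assms(2,3)])
  then have "Re r1 \<le> q - b / 2"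
    unfolding r1_def by simp
  define K where "K = (1 + cmod r1) / cmod (r2 - r1)"
  define C where "C = (1 + K) * cmod r1 ^ k + K * cmod r2 ^ k"
  have "C \<ge> 0"
    unfolding C_def K_def by simp
  show ?thesis
  proof (intro exI[of _ "C * c"] allI impI)
    fix f x0 x1 and t :: real
    assume "damped_solution b \<mu> f x0 x1 \<and> t > 0"
    then have sol: "damped_solution b \<mu> f x0 x1" and "t > 0"
      by auto
    have "exp (Re r1 * t) \<le> exp ((q - b / 2) * t)"
      using \<open>Re r1 \<le> q - b / 2\<close> \<open>t > 0\<close> by (simp add: mult_right_mono)
    also have "\<dots> \<le> c * g t"
      using g[OF \<open>t > 0\<close>] .
    finally have "C * (cmod x0 + cmod x1) * exp (Re r1 * t) \<le> C * (cmod x0 + cmod x1) * (c * g t)"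
      using \<open>C \<ge> 0\<close> by (intro mult_left_mono) simp_all
    with norm_tderiv_damped_solution_le_data[OF sol roots \<open>r1 \<noteq> r2\<close> \<open>Re r2 \<le> Re r1\<close> \<open>t > 0\<close>, of k]
    show "cmod (tderiv k f t) \<le> C * c * g t * (cmod x0 + cmod x1)"
      unfolding C_def K_def by (simp add: algebra_simps)
  qed
qed

lemma damped_mode_bound_critical:
  fixes g :: "real \<Rightarrow> real"
  assumes "\<mu> = b\<^sup>2 / 4"
    and g: "\<And>t. t > 0 \<Longrightarrow> (1 + t) * exp (- (b / 2) * t) \<le> c * g t"
  shows "\<exists>C. \<forall>f x0 x1 t. damped_solution b \<mu> f x0 x1 \<and> t > 0 \<longrightarrow>
           cmod (tderiv k f t) \<le> C * g t * (cmod x0 + cmod x1)"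
proof -
  define r where "r = - of_real b / (2 :: complex)"
  have root: "2 * r = - of_real b" "r\<^sup>2 = of_real \<mu>"
    unfolding r_def assms(1) by (simp_all add: power_divide)
  define C where "C = cmod r ^ k + (k * cmod r ^ (k - 1) + cmod r ^ k) * (1 + cmod r)"
  have "C \<ge> 0"
    unfolding C_def by simp
  show ?thesis
  proof (intro exI[of _ "C * c"] allI impI)
    fix f x0 x1 and t :: real
    assume "damped_solution b \<mu> f x0 x1 \<and> t > 0"
    then have sol: "damped_solution b \<mu> f x0 x1" and "t > 0"
      by auto
    have "C * (cmod x0 + cmod x1) * ((1 + t) * exp (Re r * t)) \<le> C * (cmod x0 + cmod x1) * (c * g t)"
      using g[OF \<open>t > 0\<close>] \<open>C \<ge> 0\<close> by (intro mult_left_mono) (simp_all add: r_def)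
    with norm_tderiv_damped_solution_double_le[OF sol root \<open>t > 0\<close>, of k]
    show "cmod (tderiv k f t) \<le> C * c * g t * (cmod x0 + cmod x1)"
      unfolding C_def by (simp add: algebra_simps)
  qed
qed

definition decay_profile :: "real \<Rightarrow> real \<Rightarrow> real \<Rightarrow> real" where
  "decay_profile b \<mu>0 t =
     (if b < 2 * sqrt \<mu>0 then exp (- (b / 2) * t)
      else if b = 2 * sqrt \<mu>0 then (1 + t) * exp (- (b / 2) * t)
      else exp (- (b / 2 - sqrt (b\<^sup>2 / 4 - \<mu>0)) * t))"

lemma
  fixes b :: real
  assumes "b \<ge> 0"
  shows less_two_sqrt_iff: "b < 2 * sqrt \<mu> \<longleftrightarrow> b\<^sup>2 / 4 < \<mu>"
    and eq_two_sqrt_iff: "b = 2 * sqrt \<mu> \<longleftrightarrow> b\<^sup>2 / 4 = \<mu>"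
proof -
  have b: "b = 2 * sqrt (b\<^sup>2 / 4)"
    using assms by (simp add: real_sqrt_divide)
  show "b < 2 * sqrt \<mu> \<longleftrightarrow> b\<^sup>2 / 4 < \<mu>"
    by (subst b) simp
  show "b = 2 * sqrt \<mu> \<longleftrightarrow> b\<^sup>2 / 4 = \<mu>"
    by (subst b) simp
qed

lemma exp_le_decay_profile:
  assumes "b > 0" and "t \<ge> 0"
  shows "exp (- (b / 2) * t) \<le> decay_profile b \<mu>0 t"
proof -
  have "0 \<le> sqrt (b\<^sup>2 / 4 - \<mu>0) * t" if "\<not> b < 2 * sqrt \<mu>0"
    using that assms less_two_sqrt_iff[of b \<mu>0] by (intro mult_nonneg_nonneg) simp_all
  with assms show ?thesis
    by (simp add: decay_profile_def algebra_simps)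
qed

lemma one_plus_mult_exp_le:
  fixes q t :: real
  assumes "q > 0" and "t \<ge> 0"
  shows "(1 + t) * exp (- (b / 2) * t) \<le> (1 + 1 / q) * exp ((q - b / 2) * t)"
proof -
  have "1 + t \<le> (1 + 1 / q) * (1 + q * t)"
    using assms by (simp add: algebra_simps)
  also have "\<dots> \<le> (1 + 1 / q) * exp (q * t)"
    using assms by (intro mult_left_mono exp_ge_add_one_self) auto
  finally have "(1 + t) * exp (- (b / 2) * t) \<le> (1 + 1 / q) * exp (q * t) * exp (- (b / 2) * t)"
    by (rule mult_right_mono) simp
  also have "\<dots> = (1 + 1 / q) * exp ((q - b / 2) * t)"
    by (simp add: algebra_simps flip: exp_add)
  finally show ?thesis .
qed

lemma damped_mode_bound:
  assumes "b > 0" and "\<mu>0 \<le> \<mu>"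
  shows "\<exists>C. \<forall>f x0 x1 t. damped_solution b \<mu> f x0 x1 \<and> t > 0 \<longrightarrow>
           cmod (tderiv k f t) \<le> C * decay_profile b \<mu>0 t * (cmod x0 + cmod x1)"
proof -
  consider (under) "b\<^sup>2 / 4 < \<mu>0" | (critical) "b\<^sup>2 / 4 = \<mu>0" | (over) "\<mu>0 < b\<^sup>2 / 4"
    by linarith
  then show ?thesis
  proof cases
    case under
    then have profile: "decay_profile b \<mu>0 t = exp ((0 - b / 2) * t)" for t
      using less_two_sqrt_iff[of b \<mu>0] \<open>b > 0\<close> by (simp add: decay_profile_def)
    from under \<open>\<mu>0 \<le> \<mu>\<close> show ?thesis
      by (intro damped_mode_bound_distinct[where q = 0 and c = 1]) (simp_all add: profile)
  next
    case critical
    then have profile: "decay_profile b \<mu>0 t = (1 + t) * exp (- (b / 2) * t)" for t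
      using eq_two_sqrt_iff[of b \<mu>0] less_two_sqrt_iff[of b \<mu>0] \<open>b > 0\<close>
      by (simp add: decay_profile_def)
    show ?thesis
    proof (cases "\<mu> = b\<^sup>2 / 4")
      case True
      then show ?thesis
        by (intro damped_mode_bound_critical[where c = 1]) (simp_all add: profile)
    next
      case False
      have "exp ((0 - b / 2) * t) \<le> 1 * decay_profile b \<mu>0 t" if "t > 0" for t
        using exp_le_decay_profile[OF \<open>b > 0\<close>, of t \<mu>0] that by simp
      with False critical \<open>\<mu>0 \<le> \<mu>\<close> show ?thesis
        by (intro damped_mode_bound_distinct[where q = 0 and c = 1]) simp_all
    qed
  next
    case over
    define q where "q = sqrt (b\<^sup>2 / 4 - \<mu>0)"
    have "q > 0" and q2: "q\<^sup>2 = b\<^sup>2 / 4 - \<mu>0"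
      using over unfolding q_def by simp_all
    have profile: "decay_profile b \<mu>0 t = exp ((q - b / 2) * t)" for t
      using over less_two_sqrt_iff[of b \<mu>0] eq_two_sqrt_iff[of b \<mu>0] \<open>b > 0\<close>
      unfolding decay_profile_def q_def by simp
    show ?thesis
    proof (cases "\<mu> = b\<^sup>2 / 4")
      case True
      have "(1 + t) * exp (- (b / 2) * t) \<le> (1 + 1 / q) * decay_profile b \<mu>0 t" if "t > 0" for t
        unfolding profile using that by (intro one_plus_mult_exp_le \<open>q > 0\<close>) simp
      with True show ?thesis
        by (intro damped_mode_bound_critical) simp_all
    next
      case False
      with \<open>q > 0\<close> q2 \<open>\<mu>0 \<le> \<mu>\<close> show ?thesis
        by (intro damped_mode_bound_distinct[where q = q and c = 1]) (simp_all add: profile)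
    qed
  qed
qed

lemma powr_le_two_powr_abs_mult:
  fixes L \<mu> e :: real
  assumes "L > 0" and "L \<le> 2 * \<mu>" and "\<mu> \<le> 2 * L"
  shows "\<mu> powr e \<le> 2 powr \<bar>e\<bar> * L powr e"
proof (cases "e \<ge> 0")
  case True
  have "\<mu> powr e \<le> (2 * L) powr e"
    using assms by (intro powr_mono2 True) simp_all
  also have "\<dots> = 2 powr \<bar>e\<bar> * L powr e"
    using True by (simp add: powr_mult)
  finally show ?thesis .
next
  case False
  have "\<mu> powr e \<le> (L / 2) powr e"
    using assms False by (intro powr_mono2') simp_all
  also have "\<dots> = 2 powr (- e) * L powr e"
    by (simp add: powr_divide powr_minus_divide)
  finally show ?thesis
    using False by simp
qed

lemma underdamped_roots:
  fixes b \<mu> :: real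
  assumes "b > 0" and "b\<^sup>2 \<le> 3 * \<mu>"
  obtains r1 r2 :: complex
  where "r1 + r2 = - of_real b" "r1 * r2 = of_real \<mu>" "r1 \<noteq> r2"
    and "Re r1 = - (b / 2)" "Re r2 = - (b / 2)" "cmod r1 = sqrt \<mu>" "cmod r2 = sqrt \<mu>"
    and "sqrt \<mu> \<le> cmod (r2 - r1)"
proof -
  have "b\<^sup>2 > 0"
    using assms(1) by simp
  with assms(2) have "\<mu> > b\<^sup>2 / 4"
    by linarith
  define w where "w = sqrt (\<mu> - b\<^sup>2 / 4)"
  have "w > 0" and w2: "w\<^sup>2 = \<mu> - b\<^sup>2 / 4"
    using \<open>\<mu> > b\<^sup>2 / 4\<close> unfolding w_def by simp_all
  define r1 where "r1 = - of_real b / 2 + \<i> * of_real w"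
  define r2 where "r2 = - of_real b / 2 - \<i> * of_real w"
  show ?thesis
  proof (rule that)
    have "r1 * r2 = of_real ((b / 2)\<^sup>2 + w\<^sup>2)"
      unfolding r1_def r2_def by (simp add: algebra_simps power2_eq_square)
    also have "(b / 2)\<^sup>2 + w\<^sup>2 = \<mu>"
      using w2 by (simp add: power_divide)
    finally show "r1 * r2 = of_real \<mu>" .
    show "cmod r1 = sqrt \<mu>" "cmod r2 = sqrt \<mu>"
      unfolding r1_def r2_def cmod_def using w2 by (simp_all add: power_divide)
    have "sqrt \<mu> \<le> 2 * w"
      using w2 assms(2) \<open>w > 0\<close> by (intro real_le_lsqrt) (simp_all add: power_mult_distrib)
    then show "sqrt \<mu> \<le> cmod (r2 - r1)"
      unfolding r1_def r2_def using \<open>w > 0\<close> by (simp add: norm_mult)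
  qed (use \<open>w > 0\<close> in \<open>simp_all add: r1_def r2_def\<close>)
qed

lemma norm_tderiv_damped_solution_underdamped_le:
  assumes "b > 0" and "b\<^sup>2 \<le> 3 * \<mu>" and sol: "damped_solution b \<mu> f x0 x1" and "t > 0"
  shows "cmod (tderiv k f t)
    \<le> 3 * exp (- (b / 2) * t) * (\<mu> powr (real k / 2) * cmod x0 + \<mu> powr ((real k - 1) / 2) * cmod x1)"
proof -
  obtain r1 r2 where roots: "r1 + r2 = - of_real b" "r1 * r2 = of_real \<mu>" and "r1 \<noteq> r2"
    and Re: "Re r1 = - (b / 2)" "Re r2 = - (b / 2)" and norm_r: "cmod r1 = sqrt \<mu>" "cmod r2 = sqrt \<mu>"
    and "sqrt \<mu> \<le> cmod (r2 - r1)"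
    by (rule underdamped_roots[OF assms(1,2)])
  have "b\<^sup>2 > 0"
    using assms(1) by simp
  with assms(2) have "\<mu> > 0"
    by linarith
  define B where "B = (x1 - r1 * x0) / (r2 - r1)"
  have "cmod B \<le> (cmod x1 + sqrt \<mu> * cmod x0) / cmod (r2 - r1)"
    using norm_triangle_ineq4[of x1 "r1 * x0"]
    unfolding B_def norm_divide by (simp add: norm_mult norm_r divide_right_mono)
  also have "\<dots> \<le> (cmod x1 + sqrt \<mu> * cmod x0) / sqrt \<mu>"
    using \<open>sqrt \<mu> \<le> cmod (r2 - r1)\<close> \<open>\<mu> > 0\<close> \<open>r1 \<noteq> r2\<close> by (intro divide_left_mono) auto
  also have "\<dots> = cmod x1 / sqrt \<mu> + cmod x0"
    using \<open>\<mu> > 0\<close> by (simp add: field_simps)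
  finally have B: "cmod B \<le> cmod x1 / sqrt \<mu> + cmod x0" .
  have "cmod (tderiv k f t) \<le> (cmod (x0 - B) * cmod r1 ^ k + cmod B * cmod r2 ^ k) * exp (Re r1 * t)"
    unfolding B_def using Re by (intro norm_tderiv_damped_solution_le_coeffs[OF sol roots \<open>r1 \<noteq> r2\<close> _ \<open>t > 0\<close>]) simp
  also have "\<dots> = (cmod (x0 - B) + cmod B) * sqrt \<mu> ^ k * exp (- (b / 2) * t)"
    unfolding norm_r Re by (simp add: algebra_simps)
  also have "\<dots> \<le> (3 * cmod x0 + 2 * (cmod x1 / sqrt \<mu>)) * sqrt \<mu> ^ k * exp (- (b / 2) * t)"
    using norm_triangle_ineq4[of x0 B] B \<open>\<mu> > 0\<close> by (intro mult_right_mono) auto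
  also have "\<dots> = exp (- (b / 2) * t) * (3 * \<mu> powr (real k / 2) * cmod x0 + 2 * \<mu> powr ((real k - 1) / 2) * cmod x1)"
    using \<open>\<mu> > 0\<close> by (simp add: powr_half_sqrt[symmetric] powr_power powr_diff algebra_simps diff_divide_distrib)
  also have "\<dots> \<le> 3 * exp (- (b / 2) * t) * (\<mu> powr (real k / 2) * cmod x0 + \<mu> powr ((real k - 1) / 2) * cmod x1)"
    by (simp add: algebra_simps)
  finally show ?thesis .
qed

lemma norm_tderiv_high_mode_le:
  assumes "b > 0" and "L \<ge> 2 * \<bar>m\<bar>" and "L \<ge> b\<^sup>2" and sol: "damped_solution b (L + m) f x0 x1" and "t > 0"
  shows "cmod (tderiv k f t)
    \<le> 3 * 2 powr ((real k + 1) / 2) * exp (- (b / 2) * t)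
        * (L powr (real k / 2) * cmod x0 + L powr ((real k - 1) / 2) * cmod x1)"
proof -
  define M where "M = 2 powr ((real k + 1) / 2)"
  have "b\<^sup>2 > 0"
    using \<open>b > 0\<close> by simp
  with assms(2,3) abs_ge_self[of m] abs_ge_minus_self[of m]
  have "L > 0" "L \<le> 2 * L + 2 * m" "L + m \<le> 2 * L"
    by linarith+
  then have "L \<le> 2 * (L + m)"
    by simp
  with assms(3) \<open>b\<^sup>2 > 0\<close> have "b\<^sup>2 \<le> 3 * (L + m)"
    by linarith
  have comparable: "(L + m) powr e \<le> M * L powr e" if "\<bar>e\<bar> \<le> (real k + 1) / 2" for e
  proof -
    have "(L + m) powr e \<le> 2 powr \<bar>e\<bar> * L powr e"
      using \<open>L > 0\<close> \<open>L \<le> 2 * (L + m)\<close> \<open>L + m \<le> 2 * L\<close> by (rule powr_le_two_powr_abs_mult)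
    also have "\<dots> \<le> M * L powr e"
      unfolding M_def using that by (intro mult_right_mono powr_mono) simp_all
    finally show ?thesis .
  qed
  have "cmod (tderiv k f t)
      \<le> 3 * exp (- (b / 2) * t) * ((L + m) powr (real k / 2) * cmod x0 + (L + m) powr ((real k - 1) / 2) * cmod x1)"
    by (rule norm_tderiv_damped_solution_underdamped_le; fact)
  also have "\<dots> \<le> 3 * exp (- (b / 2) * t) * (M * L powr (real k / 2) * cmod x0 + M * L powr ((real k - 1) / 2) * cmod x1)"
    using comparable[of "real k / 2"] comparable[of "(real k - 1) / 2"]
    by (intro mult_left_mono add_mono mult_right_mono) auto
  finally show ?thesis
    unfolding M_def by (simp add: algebra_simps)
qed

lemma add_le_powr_weighted:
  fixes L x y :: real
  assumes "L > 0" and "x \<ge> 0" and "y \<ge> 0"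
  shows "x + y \<le> (L powr (- p) + L powr (- q)) * (L powr p * x + L powr q * y)"
proof -
  have "x + y = L powr (- p) * (L powr p * x) + L powr (- q) * (L powr q * y)"
    using \<open>L > 0\<close> by (simp add: powr_minus field_simps)
  also have "\<dots> \<le> (L powr (- p) + L powr (- q)) * (L powr p * x + L powr q * y)"
    using assms by (simp add: algebra_simps)
  finally show ?thesis .
qed

lemma decay_profile_nonneg:
  assumes "b > 0" and "t \<ge> 0"
  shows "decay_profile b \<mu>0 t \<ge> 0"
  using exp_le_decay_profile[OF assms, of \<mu>0] exp_ge_zero[of "- (b / 2) * t"] by linarith

lemma finite_modes_bound:
  fixes lam :: "nat \<Rightarrow> real"
  assumes "finite S" and lam_pos: "\<And>\<xi>. lam \<xi> > 0" and "b > 0" and lam_ge: "\<And>\<xi>. \<mu>0 \<le> lam \<xi> + m"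
  obtains C where "C \<ge> 0"
    and "\<And>\<xi> f x0 x1 t. \<xi> \<in> S \<Longrightarrow> damped_solution b (lam \<xi> + m) f x0 x1 \<Longrightarrow> t > 0 \<Longrightarrow>
      cmod (tderiv k f t)
        \<le> C * decay_profile b \<mu>0 t * (lam \<xi> powr (real k / 2) * cmod x0 + lam \<xi> powr ((real k - 1) / 2) * cmod x1)"
proof -
  have "\<forall>\<xi>. \<exists>C. \<forall>f x0 x1 t. damped_solution b (lam \<xi> + m) f x0 x1 \<and> t > 0 \<longrightarrow>
           cmod (tderiv k f t) \<le> C * decay_profile b \<mu>0 t * (cmod x0 + cmod x1)"
    using damped_mode_bound[OF \<open>b > 0\<close> lam_ge] by blast
  then obtain C\<^sub>\<xi> where C\<^sub>\<xi>: "\<And>\<xi> f x0 x1 t. damped_solution b (lam \<xi> + m) f x0 x1 \<Longrightarrow> t > 0 \<Longrightarrow>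
      cmod (tderiv k f t) \<le> C\<^sub>\<xi> \<xi> * decay_profile b \<mu>0 t * (cmod x0 + cmod x1)"
    by metis
  define Q where "Q \<xi> = lam \<xi> powr (- (real k / 2)) + lam \<xi> powr (- ((real k - 1) / 2))" for \<xi>
  have Q_nonneg: "Q \<xi> \<ge> 0" for \<xi>
    unfolding Q_def by simp
  show ?thesis
  proof (rule that)
    show "(\<Sum>\<xi>\<in>S. \<bar>C\<^sub>\<xi> \<xi>\<bar> * Q \<xi>) \<ge> 0"
      using Q_nonneg by (simp add: sum_nonneg)
    fix \<xi> f x0 x1 and t :: real
    assume "\<xi> \<in> S" and sol: "damped_solution b (lam \<xi> + m) f x0 x1" and "t > 0"
    define g where "g = decay_profile b \<mu>0 t"
    define W where "W = lam \<xi> powr (real k / 2) * cmod x0 + lam \<xi> powr ((real k - 1) / 2) * cmod x1"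
    have "g \<ge> 0" "W \<ge> 0"
      unfolding g_def W_def using decay_profile_nonneg \<open>b > 0\<close> \<open>t > 0\<close> by simp_all
    have "cmod (tderiv k f t) \<le> C\<^sub>\<xi> \<xi> * g * (cmod x0 + cmod x1)"
      unfolding g_def by (rule C\<^sub>\<xi>[OF sol \<open>t > 0\<close>])
    also have "\<dots> \<le> \<bar>C\<^sub>\<xi> \<xi>\<bar> * g * (cmod x0 + cmod x1)"
      using \<open>g \<ge> 0\<close> by (intro mult_right_mono) simp_all
    also have "\<dots> \<le> \<bar>C\<^sub>\<xi> \<xi>\<bar> * g * (Q \<xi> * W)"
      unfolding Q_def W_def using lam_pos \<open>g \<ge> 0\<close> by (intro mult_left_mono add_le_powr_weighted) auto
    also have "\<dots> = (\<bar>C\<^sub>\<xi> \<xi>\<bar> * Q \<xi>) * g * W"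
      by (simp add: algebra_simps)
    also have "\<dots> \<le> (\<Sum>\<xi>\<in>S. \<bar>C\<^sub>\<xi> \<xi>\<bar> * Q \<xi>) * g * W"
      using \<open>finite S\<close> \<open>\<xi> \<in> S\<close> Q_nonneg \<open>g \<ge> 0\<close> \<open>W \<ge> 0\<close>
      by (intro mult_right_mono member_le_sum) simp_all
    finally show "cmod (tderiv k f t) \<le> (\<Sum>\<xi>\<in>S. \<bar>C\<^sub>\<xi> \<xi>\<bar> * Q \<xi>) * g * W" .
  qed
qed

lemma uniform_damped_mode_bound:
  fixes lam :: "nat \<Rightarrow> real"
  assumes lam_pos: "\<And>\<xi>. lam \<xi> > 0" and discrete: "\<And>K. finite {\<xi>. lam \<xi> \<le> K}" and "b > 0"
    and lam_ge: "\<And>\<xi>. \<mu>0 \<le> lam \<xi> + m"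
  obtains C where "C \<ge> 0"
    and "\<And>\<xi> f x0 x1 t. damped_solution b (lam \<xi> + m) f x0 x1 \<Longrightarrow> t > 0 \<Longrightarrow>
      cmod (tderiv k f t)
        \<le> C * decay_profile b \<mu>0 t * (lam \<xi> powr (real k / 2) * cmod x0 + lam \<xi> powr ((real k - 1) / 2) * cmod x1)"
proof -
  (* outside S, lam \<xi> + m is comparable to lam \<xi> and the modes are strongly underdamped *)
  define S where "S = {\<xi>. lam \<xi> \<le> 2 * \<bar>m\<bar> + b\<^sup>2}"
  obtain C\<^sub>S where "C\<^sub>S \<ge> 0" and low: "\<And>\<xi> f x0 x1 t. \<xi> \<in> S \<Longrightarrow> damped_solution b (lam \<xi> + m) f x0 x1 \<Longrightarrow> t > 0 \<Longrightarrow>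
      cmod (tderiv k f t)
        \<le> C\<^sub>S * decay_profile b \<mu>0 t * (lam \<xi> powr (real k / 2) * cmod x0 + lam \<xi> powr ((real k - 1) / 2) * cmod x1)"
    by (rule finite_modes_bound[OF discrete[of "2 * \<bar>m\<bar> + b\<^sup>2", folded S_def] lam_pos \<open>b > 0\<close> lam_ge]) (rule that)
  define M where "M = 3 * 2 powr ((real k + 1) / 2)"
  have "M \<ge> 0"
    unfolding M_def by simp
  show ?thesis
  proof (rule that)
    show "M + C\<^sub>S \<ge> 0"
      using \<open>M \<ge> 0\<close> \<open>C\<^sub>S \<ge> 0\<close> by simp
    fix \<xi> f x0 x1 and t :: real
    assume sol: "damped_solution b (lam \<xi> + m) f x0 x1" and "t > 0"
    define g where "g = decay_profile b \<mu>0 t"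
    define W where "W = lam \<xi> powr (real k / 2) * cmod x0 + lam \<xi> powr ((real k - 1) / 2) * cmod x1"
    have "exp (- (b / 2) * t) \<le> g" "g \<ge> 0" "W \<ge> 0"
      unfolding g_def W_def using exp_le_decay_profile decay_profile_nonneg \<open>b > 0\<close> \<open>t > 0\<close> by simp_all
    show "cmod (tderiv k f t) \<le> (M + C\<^sub>S) * g * W"
    proof (cases "\<xi> \<in> S")
      case True
      then have "cmod (tderiv k f t) \<le> C\<^sub>S * g * W"
        unfolding g_def W_def by (rule low[OF _ sol \<open>t > 0\<close>])
      also have "\<dots> \<le> (M + C\<^sub>S) * g * W"
        using \<open>M \<ge> 0\<close> \<open>g \<ge> 0\<close> \<open>W \<ge> 0\<close> by (intro mult_right_mono) simp_all
      finally show ?thesis .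
    next
      case False
      then have "\<not> lam \<xi> \<le> 2 * \<bar>m\<bar> + b\<^sup>2"
        unfolding S_def by simp
      then have "lam \<xi> \<ge> 2 * \<bar>m\<bar>" "lam \<xi> \<ge> b\<^sup>2"
        using zero_le_power2[of b] abs_ge_zero[of m] by linarith+
      then have "cmod (tderiv k f t) \<le> M * exp (- (b / 2) * t) * W"
        unfolding M_def W_def using norm_tderiv_high_mode_le[OF \<open>b > 0\<close> _ _ sol \<open>t > 0\<close>] by simp
      also have "\<dots> \<le> (M + C\<^sub>S) * g * W"
        using \<open>exp (- (b / 2) * t) \<le> g\<close> \<open>M \<ge> 0\<close> \<open>C\<^sub>S \<ge> 0\<close> \<open>g \<ge> 0\<close> \<open>W \<ge> 0\<close>
        by (intro mult_right_mono) (auto intro: mult_mono)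
      finally show ?thesis .
    qed
  qed
qed

lemma powr_half_squared: "(x powr (a / 2))\<^sup>2 = x powr a"
  for x a :: real
  by (simp add: powr_def power2_eq_square flip: exp_add)

lemma H_norm_le_sob_norms:
  fixes lam :: "nat \<Rightarrow> real" and D x y :: "nat \<Rightarrow> complex"
  assumes x: "sob_in lam s x" and y: "sob_in lam s' y" and "G \<ge> 0"
    and D: "\<And>\<xi>. cmod (D \<xi>) \<le> G * (lam \<xi> powr (s / 2) * cmod (x \<xi>) + lam \<xi> powr (s' / 2) * cmod (y \<xi>))"
  shows "in_H D \<and> H_norm D \<le> sqrt 2 * G * (sob_norm lam s x + sob_norm lam s' y)"
proof -
  define a where "a \<xi> = lam \<xi> powr s * (cmod (x \<xi>))\<^sup>2" for \<xi>
  define c where "c \<xi> = lam \<xi> powr s' * (cmod (y \<xi>))\<^sup>2" for \<xi>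
  have "summable a" "summable c"
    using x y unfolding a_def c_def sob_in_def by simp_all
  have bound: "(cmod (D \<xi>))\<^sup>2 \<le> 2 * G\<^sup>2 * (a \<xi> + c \<xi>)" for \<xi>
  proof -
    define X where "X = lam \<xi> powr (s / 2) * cmod (x \<xi>)"
    define Y where "Y = lam \<xi> powr (s' / 2) * cmod (y \<xi>)"
    have "(cmod (D \<xi>))\<^sup>2 \<le> (G * (X + Y))\<^sup>2"
      unfolding X_def Y_def using D[of \<xi>] by (intro power_mono) simp_all
    also have "\<dots> \<le> G\<^sup>2 * (2 * (X\<^sup>2 + Y\<^sup>2))"
      unfolding power_mult_distrib using sum_squares_bound[of X Y]
      by (intro mult_left_mono) (simp_all add: power2_sum)
    also have "X\<^sup>2 + Y\<^sup>2 = a \<xi> + c \<xi>"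
      unfolding X_def Y_def a_def c_def by (simp add: power_mult_distrib powr_half_squared)
    finally show ?thesis
      by (simp add: algebra_simps)
  qed
  have summable: "summable (\<lambda>\<xi>. 2 * G\<^sup>2 * (a \<xi> + c \<xi>))"
    by (intro summable_mult summable_add \<open>summable a\<close> \<open>summable c\<close>)
  have summable_D: "summable (\<lambda>\<xi>. (cmod (D \<xi>))\<^sup>2)"
    by (rule summable_comparison_test'[OF summable, of 0]) (simp add: bound)
  have "suminf a \<ge> 0" "suminf c \<ge> 0"
    unfolding a_def c_def by (intro suminf_nonneg \<open>summable a\<close>[unfolded a_def] \<open>summable c\<close>[unfolded c_def]; simp)+
  have "(\<Sum>\<xi>. (cmod (D \<xi>))\<^sup>2) \<le> 2 * G\<^sup>2 * (suminf a + suminf c)"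
    using suminf_le[OF bound summable_D summable]
    by (simp add: suminf_mult summable_add \<open>summable a\<close> \<open>summable c\<close> suminf_add[symmetric])
  then have "H_norm D \<le> sqrt (2 * G\<^sup>2 * (suminf a + suminf c))"
    unfolding H_norm_def by simp
  also have "\<dots> = sqrt 2 * G * sqrt (suminf a + suminf c)"
    using \<open>G \<ge> 0\<close> by (simp add: real_sqrt_mult)
  also have "\<dots> \<le> sqrt 2 * G * (sqrt (suminf a) + sqrt (suminf c))"
    using \<open>G \<ge> 0\<close> \<open>suminf a \<ge> 0\<close> \<open>suminf c \<ge> 0\<close> by (intro mult_left_mono sqrt_add_le_add_sqrt) auto
  finally show ?thesis
    using summable_D unfolding in_H_def sob_norm_def a_def c_def by simp
qed

lemma solution_decay_estimate:
  fixes lam :: "nat \<Rightarrow> real" and \<alpha> :: nat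
  assumes lam_pos: "\<And>\<xi>. lam \<xi> > 0" and discrete: "\<And>K. finite {\<xi>. lam \<xi> \<le> K}" and "b > 0"
    and lam_ge: "\<And>\<xi>. \<mu>0 \<le> lam \<xi> + m"
  shows "\<exists>C. \<forall>u0 u1 u t.
    (is_solution lam b m u0 u1 u \<and> sob_in lam (real \<alpha> + 2 * \<beta>) u0 \<and> sob_in lam (real \<alpha> - 1 + 2 * \<beta>) u1) \<and> t > 0 \<longrightarrow>
      in_H (\<lambda>\<xi>. of_real (lam \<xi> powr \<beta>) * tderiv \<alpha> (\<lambda>s. u s \<xi>) t) \<and>
      H_norm (\<lambda>\<xi>. of_real (lam \<xi> powr \<beta>) * tderiv \<alpha> (\<lambda>s. u s \<xi>) t)
        \<le> C * decay_profile b \<mu>0 t * (sob_norm lam (real \<alpha> + 2 * \<beta>) u0 + sob_norm lam (real \<alpha> - 1 + 2 * \<beta>) u1)"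
proof -
  obtain C where "C \<ge> 0" and C: "\<And>\<xi> f x0 x1 t. damped_solution b (lam \<xi> + m) f x0 x1 \<Longrightarrow> t > 0 \<Longrightarrow>
      cmod (tderiv \<alpha> f t)
        \<le> C * decay_profile b \<mu>0 t * (lam \<xi> powr (real \<alpha> / 2) * cmod x0 + lam \<xi> powr ((real \<alpha> - 1) / 2) * cmod x1)"
    using uniform_damped_mode_bound[OF lam_pos discrete \<open>b > 0\<close> lam_ge] by blast
  have exponents: "\<beta> + real \<alpha> / 2 = (real \<alpha> + 2 * \<beta>) / 2" "\<beta> + (real \<alpha> - 1) / 2 = (real \<alpha> - 1 + 2 * \<beta>) / 2"
    by (simp_all add: field_simps)
  show ?thesis
  proof (intro exI[of _ "sqrt 2 * C"] allI impI)
    fix u0 u1 u and t :: real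
    assume "(is_solution lam b m u0 u1 u \<and> sob_in lam (real \<alpha> + 2 * \<beta>) u0 \<and> sob_in lam (real \<alpha> - 1 + 2 * \<beta>) u1) \<and> t > 0"
    then have sol: "is_solution lam b m u0 u1 u" and u0: "sob_in lam (real \<alpha> + 2 * \<beta>) u0"
      and u1: "sob_in lam (real \<alpha> - 1 + 2 * \<beta>) u1" and "t > 0"
      by auto
    define G where "G = C * decay_profile b \<mu>0 t"
    have "G \<ge> 0"
      unfolding G_def using \<open>C \<ge> 0\<close> decay_profile_nonneg[OF \<open>b > 0\<close>, of t \<mu>0] \<open>t > 0\<close> by simp
    have "cmod (of_real (lam \<xi> powr \<beta>) * tderiv \<alpha> (\<lambda>s. u s \<xi>) t)
        \<le> G * (lam \<xi> powr ((real \<alpha> + 2 * \<beta>) / 2) * cmod (u0 \<xi>)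
             + lam \<xi> powr ((real \<alpha> - 1 + 2 * \<beta>) / 2) * cmod (u1 \<xi>))" for \<xi>
    proof -
      have "cmod (of_real (lam \<xi> powr \<beta>) * tderiv \<alpha> (\<lambda>s. u s \<xi>) t)
          \<le> lam \<xi> powr \<beta> * (G * (lam \<xi> powr (real \<alpha> / 2) * cmod (u0 \<xi>)
               + lam \<xi> powr ((real \<alpha> - 1) / 2) * cmod (u1 \<xi>)))"
        unfolding G_def using C[OF is_solution_imp_damped_solution[OF sol] \<open>t > 0\<close>]
        by (simp add: norm_mult mult_left_mono)
      then show ?thesis
        unfolding exponents[symmetric] powr_add by (simp add: algebra_simps)
    qed
    from H_norm_le_sob_norms[OF u0 u1 \<open>G \<ge> 0\<close> this]
    show "in_H (\<lambda>\<xi>. of_real (lam \<xi> powr \<beta>) * tderiv \<alpha> (\<lambda>s. u s \<xi>) t) \<and>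
      H_norm (\<lambda>\<xi>. of_real (lam \<xi> powr \<beta>) * tderiv \<alpha> (\<lambda>s. u s \<xi>) t)
        \<le> sqrt 2 * C * decay_profile b \<mu>0 t * (sob_norm lam (real \<alpha> + 2 * \<beta>) u0 + sob_norm lam (real \<alpha> - 1 + 2 * \<beta>) u1)"
      unfolding G_def by (simp only: mult.assoc)
  qed
qed

theorem proposition2p1:
  fixes lam :: "nat \<Rightarrow> real" and b m :: real
  assumes lam_pos: "\<forall>\<xi>. lam \<xi> > 0"
    and discrete: "\<forall>K. finite {\<xi>. lam \<xi> \<le> K}"
    and b_pos: "b > 0"
    and lm_pos: "Inf (range lam) + m > 0"
  shows "\<forall>(\<alpha>::nat) (\<beta>::real). \<beta> \<ge> 0 \<longrightarrow>
    (let lam0 = Inf (range lam);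
         D = (\<lambda>u t. (\<lambda>\<xi>. of_real (lam \<xi> powr \<beta>) * tderiv \<alpha> (\<lambda>s. u s \<xi>) t));
         R = (\<lambda>u0 u1. sob_norm lam (real \<alpha> + 2 * \<beta>) u0 + sob_norm lam (real \<alpha> - 1 + 2 * \<beta>) u1);
         Adm = (\<lambda>u0 u1 u. is_solution lam b m u0 u1 u \<and>
                  sob_in lam (real \<alpha> + 2 * \<beta>) u0 \<and> sob_in lam (real \<alpha> - 1 + 2 * \<beta>) u1)
     in (b < 2 * sqrt (lam0 + m) \<longrightarrow>
           (\<exists>C. \<forall>u0 u1 u t. Adm u0 u1 u \<and> t > 0 \<longrightarrow>
              in_H (D u t) \<and> H_norm (D u t) \<le> C * exp (- (b / 2) * t) * R u0 u1))
      \<and> (b = 2 * sqrt (lam0 + m) \<longrightarrow>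
           (\<exists>C. \<forall>u0 u1 u t. Adm u0 u1 u \<and> t > 0 \<longrightarrow>
              in_H (D u t) \<and> H_norm (D u t) \<le> C * (1 + t) * exp (- (b / 2) * t) * R u0 u1))
      \<and> (2 * sqrt (lam0 + m) < b \<longrightarrow>
           (\<exists>C. \<forall>u0 u1 u t. Adm u0 u1 u \<and> t > 0 \<longrightarrow>
              in_H (D u t) \<and>
              H_norm (D u t) \<le> C * exp (- (b / 2 - sqrt (b\<^sup>2 / 4 - lam0 - m)) * t) * R u0 u1)))"
proof (intro allI impI, goal_cases)
  case (1 \<alpha> \<beta>)
  have "bdd_below (range lam)"
    using lam_pos by (meson bdd_belowI2 less_imp_le)
  then have "Inf (range lam) + m \<le> lam \<xi> + m" for \<xi>
    by (simp add: cInf_lower)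
  from solution_decay_estimate[OF lam_pos[rule_format] discrete[rule_format] b_pos this, of \<alpha> \<beta>]
  show ?case
    unfolding Let_def decay_profile_def by (auto simp: mult.assoc diff_diff_eq; blast)
qed

end
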